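(* Let $G=(V,E)$ be a finite connected graph. Let $(\sigma(x))_{x\in V}$ be i.i.d. $N(0,1)$ and consider the divisible sandpile $$s(x)=1+\sigma(x)-\frac{1}{|V|}\sum_{y\in V}\sigma(y).$$ Then $s$ stabilizes to the all $1$ configuration, and its odometer $u:V\to[0,\infty)$ satisfies $$(u(x))_{x\in V}\overset{d}{=}\big(\eta(x)-\min_{y\in V}\eta(y)\big)_{x\in V},$$ where $(\eta(x))_{x\in V}$ is jointly Gaussian with mean zero and covariance $$\mathbb{E}[\eta(x)\eta(y)]=\frac{1}{\deg(x)\deg(y)}\sum_{z\in V}g(z,x)g(z,y),$$ with $g(x,y)=\frac{1}{|V|}\sum_{z\in V}g^z(x,y)$ and $g^z(x,y)$ the expected number of visits to $y$ by simple random walk started at $x$ before hitting $z$.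
   Context: The graph Laplacian is $\Delta u(x)=\sum_{y\sim x}(u(y)-u(x))$. For $s:V\to\mathbb{R}$, let $\mathcal{F}_s=\{f:V\to\mathbb{R}: f\ge0,\ s+\Delta f\le1\}$; $s$ stabilizes if $\mathcal{F}_s\neq\emptyset$, its odometer is $u(x)=\inf\{f(x):f\in\mathcal{F}_s\}$, and "stabilizes to the all $1$ configuration" means $s+\Delta u\equiv 1$. *)

theory Defs
  imports "HOL-Probability.Probability"
begin

definition simple_graph :: "('a \<Rightarrow> 'a \<Rightarrow> bool) \<Rightarrow> bool" where
  "simple_graph E \<longleftrightarrow> (\<forall>x y. E x y \<longrightarrow> E y x) \<and> (\<forall>x. \<not> E x x)"

definition connected_graph :: "('a \<Rightarrow> 'a \<Rightarrow> bool) \<Rightarrow> bool" where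
  "connected_graph E \<longleftrightarrow> (\<forall>x y. E\<^sup>*\<^sup>* x y)"

definition deg :: "('a::finite \<Rightarrow> 'a \<Rightarrow> bool) \<Rightarrow> 'a \<Rightarrow> nat" where
  "deg E x = card {y. E x y}"

definition laplacian :: "('a::finite \<Rightarrow> 'a \<Rightarrow> bool) \<Rightarrow> ('a \<Rightarrow> real) \<Rightarrow> 'a \<Rightarrow> real" where
  "laplacian E f x = (\<Sum>y\<in>{y. E x y}. f y - f x)"

definition stab_set :: "('a::finite \<Rightarrow> 'a \<Rightarrow> bool) \<Rightarrow> ('a \<Rightarrow> real) \<Rightarrow> ('a \<Rightarrow> real) set" where
  "stab_set E s = {f. (\<forall>x. 0 \<le> f x) \<and> (\<forall>x. s x + laplacian E f x \<le> 1)}"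

definition stabilizes :: "('a::finite \<Rightarrow> 'a \<Rightarrow> bool) \<Rightarrow> ('a \<Rightarrow> real) \<Rightarrow> bool" where
  "stabilizes E s \<longleftrightarrow> stab_set E s \<noteq> {}"

definition odometer :: "('a::finite \<Rightarrow> 'a \<Rightarrow> bool) \<Rightarrow> ('a \<Rightarrow> real) \<Rightarrow> 'a \<Rightarrow> real" where
  "odometer E s x = Inf ((\<lambda>f. f x) ` stab_set E s)"

definition srw_P :: "('a::finite \<Rightarrow> 'a \<Rightarrow> bool) \<Rightarrow> 'a \<Rightarrow> 'a \<Rightarrow> real" where
  "srw_P E w y = (if E w y then 1 / real (deg E w) else 0)"

text \<open>killed_walk E z n x y = probability that the simple random walk started at x
  is at y at time n and has not visited z at any of the times 0,...,n.\<close>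
fun killed_walk :: "('a::finite \<Rightarrow> 'a \<Rightarrow> bool) \<Rightarrow> 'a \<Rightarrow> nat \<Rightarrow> 'a \<Rightarrow> 'a \<Rightarrow> real" where
  "killed_walk E z 0 x y = (if x = y \<and> y \<noteq> z then 1 else 0)"
| "killed_walk E z (Suc n) x y =
     (if y = z then 0 else (\<Sum>w\<in>UNIV. killed_walk E z n x w * srw_P E w y))"

text \<open>g^z(x,y): expected number of visits to y (at times n < T_z) by the simple random
  walk started at x before hitting z; by linearity this is the sum over n of killed_walk.\<close>
definition green_z :: "('a::finite \<Rightarrow> 'a \<Rightarrow> bool) \<Rightarrow> 'a \<Rightarrow> 'a \<Rightarrow> 'a \<Rightarrow> real" where
  "green_z E z x y = (\<Sum>n. killed_walk E z n x y)"

definition green :: "('a::finite \<Rightarrow> 'a \<Rightarrow> bool) \<Rightarrow> 'a \<Rightarrow> 'a \<Rightarrow> real" where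
  "green E x y = (1 / real CARD('a)) * (\<Sum>z\<in>UNIV. green_z E z x y)"

definition eta_cov :: "('a::finite \<Rightarrow> 'a \<Rightarrow> bool) \<Rightarrow> 'a \<Rightarrow> 'a \<Rightarrow> real" where
  "eta_cov E x y = (1 / (real (deg E x) * real (deg E y))) * (\<Sum>z\<in>UNIV. green E z x * green E z y)"

definition centered_gaussian_vector ::
  "'b measure \<Rightarrow> ('a::finite \<Rightarrow> 'b \<Rightarrow> real) \<Rightarrow> ('a \<Rightarrow> 'a \<Rightarrow> real) \<Rightarrow> bool" where
  "centered_gaussian_vector N \<eta> C \<longleftrightarrow> prob_space N \<and> (\<forall>x. \<eta> x \<in> borel_measurable N) \<and>
     (\<forall>t::'a \<Rightarrow> real. (\<integral>\<omega>. cis (\<Sum>x\<in>UNIV. t x * \<eta> x \<omega>) \<partial>N)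
        = complex_of_real (exp (- (\<Sum>x\<in>UNIV. \<Sum>y\<in>UNIV. t x * t y * C x y) / 2)))"

end

theory Submission
  imports Defs
begin

text \<open>The function x \<mapsto> g(z,x) / deg x has Laplacian 1/|V| - \<delta>(z,\<cdot>): this is the first-step
  equation of the walk killed at w, transported by reversibility and averaged over w. Hence the
  potential \<eta>(x) = (\<Sum>z. g(z,x) \<sigma>(z)) / deg x solves s + \<Delta>\<eta> = 1. On a connected graph every f \<ge> 0 with
  s + \<Delta>f \<le> 1 differs from \<eta> by a superharmonic, hence constant, function, so the odometer is
  \<eta> - min \<eta>. As a linear image of i.i.d. standard normals, \<eta> is a centred Gaussian vector with
  the stated covariance, and a Gaussian law is determined by its characteristic function:
  continuous product test functions are uniform limits of trigonometric polynomials on cubes.\<close>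

subsection \<open>The graph Laplacian and the odometer\<close>

lemma laplacian_diff_const: "laplacian E (\<lambda>x. f x - c) x = laplacian E f x"
  unfolding laplacian_def by simp

lemma laplacian_diff: "laplacian E (\<lambda>x. f x - g x) x = laplacian E f x - laplacian E g x"
  unfolding laplacian_def by (simp add: sum_subtractf[symmetric] algebra_simps)

lemma laplacian_linear:
  "laplacian E (\<lambda>x. \<Sum>i\<in>I. c i * f i x) y = (\<Sum>i\<in>I. c i * laplacian E (f i) y)"
  unfolding laplacian_def
  by (simp add: sum_subtractf[symmetric] right_diff_distrib[symmetric] sum_distrib_left)
     (subst sum.swap, simp)

lemma sum_laplacian_eq_0:
  fixes E :: "'a::finite \<Rightarrow> 'a \<Rightarrow> bool"
  assumes "simple_graph E"
  shows "(\<Sum>x\<in>UNIV. laplacian E f x) = 0"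
proof -
  have sym: "E x y \<longleftrightarrow> E y x" for x y
    using assms unfolding simple_graph_def by blast
  have lap: "laplacian E f x = (\<Sum>y\<in>UNIV. if E x y then f y else 0) - (\<Sum>y\<in>UNIV. if E x y then f x else 0)" for x
  proof -
    have "laplacian E f x = (\<Sum>y\<in>UNIV. if E x y then f y - f x else 0)"
      using sum.inter_filter[of UNIV "\<lambda>y. f y - f x" "E x"] by (simp add: laplacian_def)
    also have "\<dots> = (\<Sum>y\<in>UNIV. (if E x y then f y else 0) - (if E x y then f x else 0))"
      by (rule sum.cong) auto
    finally show ?thesis
      by (simp only: sum_subtractf)
  qed
  have "(\<Sum>x\<in>UNIV. \<Sum>y\<in>UNIV. if E x y then f y else 0) = (\<Sum>y\<in>UNIV. \<Sum>x\<in>UNIV. if E x y then f y else 0)"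
    by (rule sum.swap)
  also have "\<dots> = (\<Sum>y\<in>UNIV. \<Sum>x\<in>UNIV. if E y x then f y else 0)"
    by (intro sum.cong refl) (simp add: sym)
  finally show ?thesis
    by (simp only: lap sum_subtractf)
qed

lemma superharmonic_imp_constant:
  fixes E :: "'a::finite \<Rightarrow> 'a \<Rightarrow> bool"
  assumes "simple_graph E" and "connected_graph E"
    and super: "\<And>x. laplacian E h x \<le> 0"
  shows "h y = h x"
proof -
  have "(\<Sum>x\<in>UNIV. - laplacian E h x) = 0"
    using sum_laplacian_eq_0[OF assms(1), of h] by (simp add: sum_negf)
  then have harmonic: "laplacian E h x = 0" for x
    using super by (subst (asm) sum_nonneg_eq_0_iff) auto
  have "Max (range h) \<in> range h"
    by (intro Max_in) auto
  then obtain x0 where x0: "h x0 = Max (range h)"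
    by (metis rangeE)
  have max: "h x \<le> h x0" for x
    unfolding x0 by (rule Max_ge) auto
  have spread: "h v = h x0" if "h u = h x0" "E u v" for u v
  proof -
    have "(\<Sum>w\<in>{w. E u w}. h w - h u) = 0"
      using harmonic[of u] unfolding laplacian_def .
    moreover have "\<forall>w\<in>{w. E u w}. h w - h u \<le> 0"
      using max that(1) by auto
    ultimately have "h v - h u = 0"
      using sum_nonneg_eq_0_iff[of "{w. E u w}" "\<lambda>w. h u - h w"] that(2)
      by (simp add: sum_subtractf)
    then show ?thesis using that(1) by simp
  qed
  have "h v = h x0" for v
    using \<open>connected_graph E\<close>[unfolded connected_graph_def, rule_format, of x0 v]
  proof (induction rule: rtranclp_induct)
    case (step u v)
    then show ?case using spread by blast
  qed simp
  then show ?thesis by metis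
qed

lemma odometer_eq_shift_min:
  fixes E :: "'a::finite \<Rightarrow> 'a \<Rightarrow> bool"
  assumes "simple_graph E" and "connected_graph E"
    and w: "\<And>x. s x + laplacian E w x = 1"
  shows "stabilizes E s" and "odometer E s = (\<lambda>x. w x - Min (range w))"
proof -
  define u where "u x = w x - Min (range w)" for x
  have "Min (range w) \<in> range w"
    by (intro Min_in) auto
  then obtain x1 where x1: "w x1 = Min (range w)"
    by (metis rangeE)
  have lap_u: "laplacian E u x = laplacian E w x" for x
    unfolding u_def by (rule laplacian_diff_const)
  have u_stab: "u \<in> stab_set E s"
    unfolding stab_set_def using w lap_u by (simp add: u_def)
  then show "stabilizes E s"
    unfolding stabilizes_def by auto
  have u_le: "u x \<le> f x" if f: "f \<in> stab_set E s" for f x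
  proof -
    have "laplacian E (\<lambda>x. f x - u x) y \<le> 0" for y
    proof -
      have "s y + laplacian E f y \<le> 1"
        using f unfolding stab_set_def by auto
      then show ?thesis
        using w[of y] lap_u[of y] by (simp add: laplacian_diff)
    qed
    then have "f x - u x = f x1 - u x1"
      by (rule superharmonic_imp_constant[OF assms(1,2)])
    moreover have "u x1 = 0" "0 \<le> f x1"
      using x1 f unfolding u_def stab_set_def by auto
    ultimately show ?thesis by linarith
  qed
  have "odometer E s x = u x" for x
    unfolding odometer_def by (rule cInf_eq_minimum) (use u_stab u_le in auto)
  then show "odometer E s = (\<lambda>x. w x - Min (range w))"
    unfolding u_def by auto
qed

subsection \<open>The random walk killed at a vertex\<close>

lemma srw_P_nonneg: "0 \<le> srw_P E w y"
  by (simp add: srw_P_def)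

lemma sum_srw_P_le_1: "(\<Sum>y\<in>UNIV. srw_P E w y) \<le> 1"
proof -
  have "(\<Sum>y\<in>UNIV. srw_P E w y) = (\<Sum>y\<in>{y. E w y}. 1 / real (deg E w))"
    using sum.inter_filter[of UNIV "\<lambda>_. 1 / real (deg E w)" "E w"] by (simp add: srw_P_def)
  also have "\<dots> = real (deg E w) * (1 / real (deg E w))"
    by (simp add: deg_def)
  also have "\<dots> \<le> 1"
    by (cases "deg E w = 0") auto
  finally show ?thesis .
qed

lemma srw_P_ge_inverse_card:
  fixes E :: "'a::finite \<Rightarrow> 'a \<Rightarrow> bool"
  assumes "E x v"
  shows "1 / real CARD('a) \<le> srw_P E x v"
proof -
  have "0 < deg E x"
    using assms unfolding deg_def by (metis card_gt_0_iff empty_iff finite mem_Collect_eq)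
  moreover have "deg E x \<le> CARD('a)"
    unfolding deg_def by (rule card_mono) auto
  ultimately show ?thesis
    using assms by (simp add: srw_P_def frac_le)
qed

lemma killed_walk_nonneg: "0 \<le> killed_walk E z n x y"
  by (induction n arbitrary: y) (auto intro!: sum_nonneg mult_nonneg_nonneg srw_P_nonneg)

lemma killed_walk_at_target: "killed_walk E z n x z = 0"
  by (cases n) auto

lemma killed_walk_from_target: "killed_walk E z n z y = 0"
  by (induction n arbitrary: y) auto

lemma killed_walk_Suc_0: "killed_walk E z (Suc 0) x w = (if w = z \<or> x = z then 0 else srw_P E x w)"
proof -
  have "(\<Sum>u\<in>UNIV. killed_walk E z 0 x u * srw_P E u w)
      = (\<Sum>u\<in>UNIV. if u = x then (if x = z then 0 else srw_P E x w) else 0)"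
    by (intro sum.cong) auto
  then show ?thesis
    by auto
qed

lemma killed_walk_add:
  "killed_walk E z (m + n) x y = (\<Sum>w\<in>UNIV. killed_walk E z m x w * killed_walk E z n w y)"
proof (induction n arbitrary: y)
  case 0
  have "(\<Sum>w\<in>UNIV. killed_walk E z m x w * killed_walk E z 0 w y)
      = (\<Sum>w\<in>UNIV. if w = y then killed_walk E z m x y else 0)"
    by (intro sum.cong) (auto simp: killed_walk_at_target)
  then show ?case by simp
next
  case (Suc n)
  show ?case
  proof (cases "y = z")
    case False
    have "killed_walk E z (m + Suc n) x y = (\<Sum>u\<in>UNIV. killed_walk E z (m + n) x u * srw_P E u y)"
      using False by simp
    also have "\<dots> = (\<Sum>u\<in>UNIV. \<Sum>w\<in>UNIV. killed_walk E z m x w * killed_walk E z n w u * srw_P E u y)"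
      by (simp add: Suc.IH sum_distrib_right)
    also have "\<dots> = (\<Sum>w\<in>UNIV. \<Sum>u\<in>UNIV. killed_walk E z m x w * killed_walk E z n w u * srw_P E u y)"
      by (rule sum.swap)
    also have "\<dots> = (\<Sum>w\<in>UNIV. killed_walk E z m x w * killed_walk E z (Suc n) w y)"
      using False by (simp add: sum_distrib_left mult.assoc)
    finally show ?thesis .
  qed simp
qed

definition survival :: "('a::finite \<Rightarrow> 'a \<Rightarrow> bool) \<Rightarrow> 'a \<Rightarrow> nat \<Rightarrow> 'a \<Rightarrow> real" where
  "survival E z n x = (\<Sum>y\<in>UNIV. killed_walk E z n x y)"

lemma survival_nonneg: "0 \<le> survival E z n x"
  unfolding survival_def by (intro sum_nonneg killed_walk_nonneg)

lemma killed_walk_le_survival: "killed_walk E z n x y \<le> survival E z n x"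
  unfolding survival_def by (rule member_le_sum) (auto intro: killed_walk_nonneg)

lemma survival_from_target: "survival E z n z = 0"
  by (simp add: survival_def killed_walk_from_target)

lemma survival_add: "survival E z (n + m) x = (\<Sum>w\<in>UNIV. killed_walk E z n x w * survival E z m w)"
  unfolding survival_def killed_walk_add by (subst sum.swap) (simp add: sum_distrib_left)

lemma survival_Suc_le: "survival E z (Suc n) x \<le> survival E z n x"
proof -
  have "survival E z (Suc n) x \<le> (\<Sum>y\<in>UNIV. \<Sum>u\<in>UNIV. killed_walk E z n x u * srw_P E u y)"
    unfolding survival_def
    by (intro sum_mono) (auto intro!: sum_nonneg mult_nonneg_nonneg killed_walk_nonneg srw_P_nonneg)
  also have "\<dots> = (\<Sum>u\<in>UNIV. killed_walk E z n x u * (\<Sum>y\<in>UNIV. srw_P E u y))"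
    by (subst sum.swap) (simp add: sum_distrib_left)
  also have "\<dots> \<le> (\<Sum>u\<in>UNIV. killed_walk E z n x u * 1)"
    by (intro sum_mono mult_left_mono sum_srw_P_le_1 killed_walk_nonneg)
  finally show ?thesis
    by (simp add: survival_def)
qed

lemma survival_antimono: "m \<le> n \<Longrightarrow> survival E z n x \<le> survival E z m x"
  by (induction n rule: dec_induct) (auto intro: order.trans[OF survival_Suc_le])

lemma survival_le_1: "survival E z n x \<le> 1"
proof -
  have "survival E z n x \<le> survival E z 0 x"
    by (rule survival_antimono) simp
  also have "\<dots> \<le> 1"
    by (simp add: survival_def sum.If_cases card_le_Suc0_iff_eq)
  finally show ?thesis .
qed

lemma survival_path_bound:
  fixes E :: "'a::finite \<Rightarrow> 'a \<Rightarrow> bool"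
  assumes "E\<^sup>*\<^sup>* x z"
  shows "\<exists>j. survival E z j x \<le> 1 - (1 / real CARD('a)) ^ j"
  using assms
proof (induction rule: converse_rtranclp_induct)
  case base
  show ?case
    by (intro exI[of _ 0]) (simp add: survival_from_target)
next
  case (step x v)
  define c where "c = 1 / real CARD('a)"
  have c: "0 < c" "c \<le> 1"
    unfolding c_def by auto
  from step.IH obtain j where j: "survival E z j v \<le> 1 - c ^ j"
    unfolding c_def by auto
  show ?case
  proof (cases "x = z")
    case True
    then show ?thesis
      by (intro exI[of _ 0]) (simp add: survival_from_target)
  next
    case False
    have Pv: "c \<le> srw_P E x v"
      unfolding c_def using step.hyps(1) by (rule srw_P_ge_inverse_card)
    have "survival E z (Suc 0 + j) x = (\<Sum>w\<in>UNIV. killed_walk E z (Suc 0) x w * survival E z j w)"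
      by (rule survival_add)
    also have "\<dots> \<le> (\<Sum>w\<in>UNIV. srw_P E x w * survival E z j w)"
      using False by (intro sum_mono)
        (simp only: killed_walk_Suc_0, auto intro!: mult_nonneg_nonneg srw_P_nonneg survival_nonneg)
    also have "\<dots> = srw_P E x v * survival E z j v + (\<Sum>w\<in>UNIV - {v}. srw_P E x w * survival E z j w)"
      by (subst sum.remove[of UNIV v]) auto
    also have "\<dots> \<le> srw_P E x v * (1 - c ^ j) + (\<Sum>w\<in>UNIV - {v}. srw_P E x w)"
      by (intro add_mono mult_left_mono j srw_P_nonneg sum_mono)
         (auto intro: mult_left_le[OF survival_le_1 srw_P_nonneg])
    also have "\<dots> = srw_P E x v * (1 - c ^ j) + ((\<Sum>w\<in>UNIV. srw_P E x w) - srw_P E x v)"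
      by (subst sum.remove[of UNIV v]) auto
    also have "\<dots> \<le> 1 - srw_P E x v * c ^ j"
      using sum_srw_P_le_1[of E x] by (simp add: algebra_simps)
    also have "\<dots> \<le> 1 - c ^ Suc j"
      using Pv c by (simp add: mult_right_mono)
    finally show ?thesis
      unfolding c_def by (intro exI[of _ "Suc j"]) simp
  qed
qed

lemma survival_uniform_bound:
  fixes E :: "'a::finite \<Rightarrow> 'a \<Rightarrow> bool"
  assumes "connected_graph E"
  obtains J q where "0 < J" "0 < q" "q < 1" "\<And>x. survival E z J x \<le> q"
proof -
  define c where "c = 1 / real CARD('a)"
  have c: "0 < c" "c \<le> 1"
    unfolding c_def by auto
  have "\<forall>x. \<exists>j. survival E z j x \<le> 1 - c ^ j"
    using survival_path_bound assms unfolding connected_graph_def c_def by blast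
  then obtain j where j: "\<And>x. survival E z (j x) x \<le> 1 - c ^ j x"
    by metis
  define J where "J = Suc (Max (range j))"
  have jJ: "j x \<le> J" for x
    unfolding J_def by (simp add: le_SucI)
  have "survival E z J x \<le> 1 - c ^ J" for x
  proof -
    have "survival E z J x \<le> 1 - c ^ j x"
      using survival_antimono[OF jJ] j by (rule order.trans)
    also have "\<dots> \<le> 1 - c ^ J"
      using c jJ[of x] by (simp add: power_decreasing)
    finally show ?thesis .
  qed
  moreover have "0 < c ^ J"
    using c by simp
  ultimately show ?thesis
    by (intro that[of J "max (1 - c ^ J) (1 / 2)"]) (auto simp: J_def intro: le_max_iff_disj[THEN iffD2])
qed

lemma survival_geometric_bound:
  fixes E :: "'a::finite \<Rightarrow> 'a \<Rightarrow> bool"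
  assumes "connected_graph E"
  obtains r C where "0 < r" "r < 1" "\<And>n x. survival E z n x \<le> C * r ^ n"
proof -
  obtain J q where J: "0 < J" and q: "0 < q" "q < 1" and bound: "\<And>x. survival E z J x \<le> q"
    using survival_uniform_bound[OF assms] by metis
  define r where "r = root J q"
  have r: "0 < r" "r < 1" "r ^ J = q"
    unfolding r_def using J q by (auto simp: real_root_gt_zero)
  have step: "survival E z (n + J) x \<le> q * survival E z n x" for n x
  proof -
    have "survival E z (n + J) x = (\<Sum>w\<in>UNIV. killed_walk E z n x w * survival E z J w)"
      by (rule survival_add)
    also have "\<dots> \<le> (\<Sum>w\<in>UNIV. killed_walk E z n x w * q)"
      by (intro sum_mono mult_left_mono killed_walk_nonneg bound)
    also have "\<dots> = q * survival E z n x"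
      by (simp add: survival_def sum_distrib_left mult.commute)
    finally show ?thesis .
  qed
  have "survival E z n x \<le> (1 / q) * r ^ n" for n x
  proof (induction n arbitrary: x rule: less_induct)
    case (less n)
    show ?case
    proof (cases "n < J")
      case True
      have "q \<le> r ^ n"
        unfolding r(3)[symmetric] using r True by (intro power_decreasing) auto
      then have "1 \<le> (1 / q) * r ^ n"
        using q by (simp add: field_simps)
      then show ?thesis
        using survival_le_1[of E z n x] by linarith
    next
      case False
      then obtain m where n: "n = m + J"
        by (metis add.commute le_add_diff_inverse not_less)
      have "survival E z n x \<le> q * survival E z m x"
        unfolding n by (rule step)
      also have "\<dots> \<le> q * ((1 / q) * r ^ m)"
        using less.IH[of m] n J q by (intro mult_left_mono) auto
      also have "\<dots> = (1 / q) * r ^ n"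
        unfolding n using r q by (simp add: power_add)
      finally show ?thesis .
    qed
  qed
  then show ?thesis
    using that r by blast
qed

lemma summable_killed_walk:
  fixes E :: "'a::finite \<Rightarrow> 'a \<Rightarrow> bool"
  assumes "connected_graph E"
  shows "summable (\<lambda>n. killed_walk E z n x y)"
proof -
  obtain r C where r: "0 < r" "r < 1" and C: "\<And>n x. survival E z n x \<le> C * r ^ n"
    using survival_geometric_bound[OF assms] by metis
  show ?thesis
  proof (rule summable_comparison_test')
    show "summable (\<lambda>n. C * r ^ n)"
      using r by (intro summable_mult summable_geometric) auto
    show "norm (killed_walk E z n x y) \<le> C * r ^ n" for n
      using killed_walk_nonneg[of E z n x y] killed_walk_le_survival[of E z n x y] C[of n x] by simp
  qed
qed

subsection \<open>The Green function\<close>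

lemma green_z_eq:
  fixes E :: "'a::finite \<Rightarrow> 'a \<Rightarrow> bool"
  assumes "connected_graph E" and "y \<noteq> w"
  shows "green_z E w z y = (if z = y then 1 else 0) + (\<Sum>v\<in>UNIV. green_z E w z v * srw_P E v y)"
proof -
  have S: "summable (\<lambda>n. killed_walk E w n z v)" for v
    by (rule summable_killed_walk[OF assms(1)])
  have "green_z E w z y = killed_walk E w 0 z y + (\<Sum>n. killed_walk E w (Suc n) z y)"
    unfolding green_z_def using suminf_split_head[OF S[of y]] by simp
  also have "(\<Sum>n. killed_walk E w (Suc n) z y) = (\<Sum>n. \<Sum>v\<in>UNIV. killed_walk E w n z v * srw_P E v y)"
    using assms(2) by simp
  also have "\<dots> = (\<Sum>v\<in>UNIV. \<Sum>n. killed_walk E w n z v * srw_P E v y)"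
    by (rule suminf_sum) (intro summable_mult2 S)
  also have "\<dots> = (\<Sum>v\<in>UNIV. green_z E w z v * srw_P E v y)"
    unfolding green_z_def by (intro sum.cong refl suminf_mult2[symmetric] S)
  finally show ?thesis
    using assms(2) by simp
qed

lemma deg_eq_0_imp_eq:
  fixes E :: "'a::finite \<Rightarrow> 'a \<Rightarrow> bool"
  assumes "connected_graph E" and "deg E y = 0"
  shows "x = y"
proof (rule ccontr)
  assume "x \<noteq> y"
  moreover have "E\<^sup>*\<^sup>* y x"
    using assms(1) unfolding connected_graph_def by auto
  ultimately obtain v where "E y v"
    by (metis converse_rtranclpE)
  then show False
    using assms(2) unfolding deg_def by auto
qed

text \<open>Reversibility of the walk, deg x * P(x,y) = deg y * P(y,x), turns the first-step equation
  for g^w(z, \<cdot>) into a Poisson equation for g^w(z, \<cdot>) / deg. At w itself the value follows from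
  the Laplacian summing to zero.\<close>
lemma laplacian_green_z_div_deg:
  fixes E :: "'a::finite \<Rightarrow> 'a \<Rightarrow> bool"
  assumes "simple_graph E" and "connected_graph E"
  shows "laplacian E (\<lambda>y. green_z E w z y / real (deg E y)) y
           = (if y = w then 1 else 0) - (if y = z then 1 else 0)"
proof -
  define k where "k y = green_z E w z y / real (deg E y)" for y
  have sym: "E x y \<longleftrightarrow> E y x" for x y
    using assms(1) unfolding simple_graph_def by blast
  have off_w: "laplacian E k y = - (if y = z then 1 else 0)" if "y \<noteq> w" for y
  proof (cases "deg E y = 0")
    case True
    then show ?thesis
      using deg_eq_0_imp_eq[OF assms(2) True, of w] that by simp
  next
    case False
    have "(\<Sum>v\<in>UNIV. green_z E w z v * srw_P E v y) = (\<Sum>v\<in>UNIV. if E y v then k v else 0)"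
      unfolding k_def srw_P_def by (intro sum.cong refl) (auto simp: sym)
    also have "\<dots> = (\<Sum>v\<in>{v. E y v}. k v)"
      using sum.inter_filter[of UNIV k "E y"] by simp
    finally have rec: "green_z E w z y = (if z = y then 1 else 0) + (\<Sum>v\<in>{v. E y v}. k v)"
      using green_z_eq[OF assms(2) that] by simp
    have "laplacian E k y = (\<Sum>v\<in>{v. E y v}. k v) - real (deg E y) * k y"
      unfolding laplacian_def by (simp add: sum_subtractf deg_def)
    also have "real (deg E y) * k y = green_z E w z y"
      unfolding k_def using False by simp
    finally show ?thesis
      using rec by auto
  qed
  have "laplacian E k w = (if w = z then 0 else 1)"
  proof -
    have "0 = (\<Sum>x\<in>UNIV. laplacian E k x)"
      by (rule sum_laplacian_eq_0[OF assms(1), symmetric])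
    also have "\<dots> = laplacian E k w + (\<Sum>x\<in>UNIV - {w}. - (if x = z then 1 else 0))"
      by (subst sum.remove[of UNIV w]) (auto intro!: sum.cong off_w)
    finally show ?thesis
      by (simp add: sum_negf)
  qed
  then show ?thesis
    using off_w unfolding k_def by (cases "y = w") auto
qed

lemma laplacian_green_div_deg:
  fixes E :: "'a::finite \<Rightarrow> 'a \<Rightarrow> bool"
  assumes "simple_graph E" and "connected_graph E"
  shows "laplacian E (\<lambda>x. green E z x / real (deg E x)) y = 1 / real CARD('a) - (if y = z then 1 else 0)"
proof -
  define n where "n = real CARD('a)"
  have "(\<lambda>x. green E z x / real (deg E x)) = (\<lambda>x. \<Sum>w\<in>UNIV. (1 / n) * (green_z E w z x / real (deg E x)))"
    unfolding green_def n_def by (simp add: sum_divide_distrib sum_distrib_left)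
  then have "laplacian E (\<lambda>x. green E z x / real (deg E x)) y
      = (\<Sum>w\<in>UNIV. (1 / n) * ((if y = w then 1 else 0) - (if y = z then 1 else 0)))"
    by (simp only: laplacian_linear laplacian_green_z_div_deg[OF assms])
  also have "\<dots> = (1 / n) * ((\<Sum>w\<in>UNIV. if y = w then 1 else 0) - (\<Sum>w\<in>(UNIV::'a set). if y = z then 1 else 0))"
    by (simp only: sum_distrib_left[symmetric] sum_subtractf)
  also have "\<dots> = (1 / n) * (1 - n * (if y = z then 1 else 0))"
    by (simp add: n_def)
  also have "\<dots> = 1 / n - (if y = z then 1 else 0)"
    by (simp add: n_def right_diff_distrib)
  finally show ?thesis
    unfolding n_def .
qed

lemma laplacian_green_potential:
  fixes E :: "'a::finite \<Rightarrow> 'a \<Rightarrow> bool"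
  assumes "simple_graph E" and "connected_graph E"
  shows "laplacian E (\<lambda>x. \<Sum>z\<in>UNIV. green E z x / real (deg E x) * \<sigma> z) y
           = (1 / real CARD('a)) * (\<Sum>z\<in>UNIV. \<sigma> z) - \<sigma> y"
proof -
  have "laplacian E (\<lambda>x. \<Sum>z\<in>UNIV. green E z x / real (deg E x) * \<sigma> z) y
      = (\<Sum>z\<in>UNIV. \<sigma> z * (1 / real CARD('a) - (if y = z then 1 else 0)))"
    by (simp only: mult.commute[of _ "\<sigma> _"] laplacian_linear laplacian_green_div_deg[OF assms])
  also have "\<dots> = (\<Sum>z\<in>UNIV. \<sigma> z / real CARD('a)) - (\<Sum>z\<in>UNIV. if y = z then \<sigma> z else 0)"
    by (simp add: right_diff_distrib sum_subtractf if_distrib[of "\<lambda>c. _ * c"] cong: if_cong)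
  finally show ?thesis
    by (simp add: sum_divide_distrib)
qed

subsection \<open>Gaussian vectors\<close>

lemma borel_measurable_cis[measurable]:
  "f \<in> borel_measurable M \<Longrightarrow> (\<lambda>x. cis (f x)) \<in> borel_measurable M"
  unfolding cis_conv_exp by measurable

lemma cis_sum: "finite A \<Longrightarrow> cis (sum f A) = (\<Prod>i\<in>A. cis (f i))"
  by (induction rule: finite_induct) (auto simp: cis_mult[symmetric])

lemma (in prob_space) char_lincomb_std_normal:
  fixes \<sigma> :: "'i::finite \<Rightarrow> 'a \<Rightarrow> real"
  assumes indep: "indep_vars (\<lambda>_. borel) \<sigma> UNIV"
    and normal: "\<And>x. distributed M lborel (\<sigma> x) std_normal_density"
  shows "(\<integral>\<omega>. cis (\<Sum>x\<in>UNIV. c x * \<sigma> x \<omega>) \<partial>M) = complex_of_real (exp (- (\<Sum>x\<in>UNIV. (c x)\<^sup>2) / 2))"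
proof -
  have [measurable]: "\<sigma> x \<in> borel_measurable M" for x
    using normal[of x] by (simp add: distributed_def)
  have indep_cis: "indep_vars (\<lambda>_. borel) (\<lambda>x \<omega>. cis (c x * \<sigma> x \<omega>)) UNIV"
    by (rule indep_vars_compose2[OF indep]) (intro borel_measurable_continuous_onI continuous_intros)
  have single: "(\<integral>\<omega>. cis (c x * \<sigma> x \<omega>) \<partial>M) = complex_of_real (exp (- (c x)\<^sup>2 / 2))" for x
  proof -
    have "(\<integral>\<omega>. cis (c x * \<sigma> x \<omega>) \<partial>M) = (\<integral>y. cis (c x * y) \<partial>distr M lborel (\<sigma> x))"
      by (subst integral_distr) auto
    also have "distr M lborel (\<sigma> x) = std_normal_distribution"
      using normal[of x] by (simp add: distributed_def)
    also have "(\<integral>y. cis (c x * y) \<partial>std_normal_distribution) = char std_normal_distribution (c x)"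
      by (simp add: char_def cis_conv_exp)
    finally show ?thesis
      by (simp add: char_std_normal_distribution)
  qed
  have "(\<integral>\<omega>. cis (\<Sum>x\<in>UNIV. c x * \<sigma> x \<omega>) \<partial>M) = (\<integral>\<omega>. (\<Prod>x\<in>UNIV. cis (c x * \<sigma> x \<omega>)) \<partial>M)"
    by (simp add: cis_sum)
  also have "\<dots> = (\<Prod>x\<in>UNIV. \<integral>\<omega>. cis (c x * \<sigma> x \<omega>) \<partial>M)"
    by (rule indep_vars_lebesgue_integral[OF _ indep_cis]) (auto intro!: integrable_const_bound[where B=1])
  also have "\<dots> = complex_of_real (exp (\<Sum>x\<in>UNIV. - (c x)\<^sup>2 / 2))"
    by (simp add: single exp_sum)
  also have "(\<Sum>x\<in>UNIV. - (c x)\<^sup>2 / 2) = - (\<Sum>x\<in>UNIV. (c x)\<^sup>2) / 2"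
    by (simp add: sum_negf sum_divide_distrib)
  finally show ?thesis .
qed

lemma centered_gaussian_vector_linear_transform:
  fixes \<sigma> :: "'a::finite \<Rightarrow> 'b \<Rightarrow> real" and A :: "'c::finite \<Rightarrow> 'a \<Rightarrow> real"
  assumes "prob_space M"
    and indep: "prob_space.indep_vars M (\<lambda>_. borel) \<sigma> UNIV"
    and normal: "\<And>x. distributed M lborel (\<sigma> x) std_normal_density"
  shows "centered_gaussian_vector M (\<lambda>x \<omega>. \<Sum>z\<in>UNIV. A x z * \<sigma> z \<omega>) (\<lambda>x y. \<Sum>z\<in>UNIV. A x z * A y z)"
  unfolding centered_gaussian_vector_def
proof (intro conjI allI)
  interpret prob_space M by fact
  have [measurable]: "\<sigma> x \<in> borel_measurable M" for x
    using normal[of x] by (simp add: distributed_def)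
  show "prob_space M" by fact
  show "(\<lambda>\<omega>. \<Sum>z\<in>UNIV. A x z * \<sigma> z \<omega>) \<in> borel_measurable M" for x
    by measurable
  fix t :: "'c \<Rightarrow> real"
  define c where "c z = (\<Sum>x\<in>UNIV. t x * A x z)" for z
  have "(\<Sum>x\<in>UNIV. t x * (\<Sum>z\<in>UNIV. A x z * \<sigma> z \<omega>)) = (\<Sum>z\<in>UNIV. c z * \<sigma> z \<omega>)" for \<omega>
    unfolding c_def by (simp add: sum_distrib_left sum_distrib_right mult.assoc) (rule sum.swap)
  moreover have "(\<Sum>z\<in>UNIV. (c z)\<^sup>2) = (\<Sum>x\<in>UNIV. \<Sum>y\<in>UNIV. t x * t y * (\<Sum>z\<in>UNIV. A x z * A y z))"
  proof -
    have "(\<Sum>z\<in>UNIV. (c z)\<^sup>2) = (\<Sum>z\<in>UNIV. \<Sum>x\<in>UNIV. \<Sum>y\<in>UNIV. t x * t y * (A x z * A y z))"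
      unfolding c_def power2_eq_square sum_product by (intro sum.cong refl) (simp add: algebra_simps)
    also have "\<dots> = (\<Sum>x\<in>UNIV. \<Sum>z\<in>UNIV. \<Sum>y\<in>UNIV. t x * t y * (A x z * A y z))"
      by (rule sum.swap)
    also have "\<dots> = (\<Sum>x\<in>UNIV. \<Sum>y\<in>UNIV. \<Sum>z\<in>UNIV. t x * t y * (A x z * A y z))"
      by (intro sum.cong refl sum.swap)
    finally show ?thesis
      by (simp add: sum_distrib_left)
  qed
  ultimately show "(\<integral>\<omega>. cis (\<Sum>x\<in>UNIV. t x * (\<Sum>z\<in>UNIV. A x z * \<sigma> z \<omega>)) \<partial>M)
      = complex_of_real (exp (- (\<Sum>x\<in>UNIV. \<Sum>y\<in>UNIV. t x * t y * (\<Sum>z\<in>UNIV. A x z * A y z)) / 2))"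
    using char_lincomb_std_normal[OF indep normal, of c] by simp
qed

subsection \<open>Uniqueness of the multivariate characteristic function\<close>

definition char_vec :: "('i::finite \<Rightarrow> real) measure \<Rightarrow> ('i \<Rightarrow> real) \<Rightarrow> complex" where
  "char_vec \<mu> t = (\<integral>v. cis (\<Sum>x\<in>UNIV. t x * v x) \<partial>\<mu>)"

inductive trig_polynomial :: "(('i::finite \<Rightarrow> real) \<Rightarrow> complex) \<Rightarrow> bool" where
  trig_polynomial_cis: "trig_polynomial (\<lambda>v. cis (\<Sum>x\<in>UNIV. t x * v x))"
| trig_polynomial_scale: "trig_polynomial f \<Longrightarrow> trig_polynomial (\<lambda>v. c * f v)"
| trig_polynomial_add: "trig_polynomial f \<Longrightarrow> trig_polynomial g \<Longrightarrow> trig_polynomial (\<lambda>v. f v + g v)"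

lemma trig_polynomial_mult:
  assumes "trig_polynomial f" and "trig_polynomial g"
  shows "trig_polynomial (\<lambda>v. f v * g v)"
  using assms
proof (induction rule: trig_polynomial.induct)
  case (trig_polynomial_cis t)
  show ?case
    using trig_polynomial_cis
  proof (induction rule: trig_polynomial.induct)
    case (trig_polynomial_cis t')
    have "(\<lambda>v. cis (\<Sum>x\<in>UNIV. t x * v x) * cis (\<Sum>x\<in>UNIV. t' x * v x))
        = (\<lambda>v. cis (\<Sum>x\<in>UNIV. (t x + t' x) * v x))"
      by (simp add: cis_mult distrib_right sum.distrib)
    then show ?case
      by (simp add: trig_polynomial.trig_polynomial_cis)
  next
    case (trig_polynomial_scale f c)
    then show ?case
      using trig_polynomial.trig_polynomial_scale[of _ c] by (simp add: mult.left_commute)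
  next
    case (trig_polynomial_add f g)
    then show ?case
      using trig_polynomial.trig_polynomial_add by (simp add: distrib_left)
  qed
next
  case (trig_polynomial_scale f c)
  then show ?case
    using trig_polynomial.trig_polynomial_scale[of _ c] by (simp add: mult.assoc)
next
  case (trig_polynomial_add f1 f2)
  then show ?case
    using trig_polynomial.trig_polynomial_add by (simp add: distrib_right)
qed

lemma trig_polynomial_const: "trig_polynomial (\<lambda>v. c)"
  using trig_polynomial_scale[OF trig_polynomial_cis[of "\<lambda>_. 0"], of c] by simp

lemma trig_polynomial_prod:
  "finite A \<Longrightarrow> (\<And>x. x \<in> A \<Longrightarrow> trig_polynomial (F x)) \<Longrightarrow> trig_polynomial (\<lambda>v. \<Prod>x\<in>A. F x v)"
  by (induction rule: finite_induct) (auto intro: trig_polynomial_const trig_polynomial_mult)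

lemma trig_polynomial_bounded: "trig_polynomial f \<Longrightarrow> \<exists>B. \<forall>v. norm (f v) \<le> B"
proof (induction rule: trig_polynomial.induct)
  case (trig_polynomial_scale f c)
  then obtain B where "\<forall>v. norm (f v) \<le> B"
    by auto
  then have "\<forall>v. norm (c * f v) \<le> norm c * B"
    by (simp add: norm_mult mult_left_mono)
  then show ?case ..
next
  case (trig_polynomial_add f g)
  then obtain B B' where "\<forall>v. norm (f v) \<le> B" "\<forall>v. norm (g v) \<le> B'"
    by auto
  then have "\<forall>v. norm (f v + g v) \<le> B + B'"
    by (meson add_mono norm_triangle_le)
  then show ?case ..
qed auto

lemma trig_polynomial_measurable:
  "trig_polynomial f \<Longrightarrow> f \<in> borel_measurable (Pi\<^sub>M UNIV (\<lambda>_. borel))"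
  by (induction rule: trig_polynomial.induct) auto

lemma trig_polynomial_poly_sin_coord:
  assumes "real_polynomial_function g"
  shows "trig_polynomial (\<lambda>v. complex_of_real (g (sin (v x / L))))"
  using assms
proof (induction rule: real_polynomial_function.induct)
  case (linear f)
  have coord: "(\<Sum>z\<in>UNIV. (if z = x then c else 0) * v z) = c * v x" for c and v :: "'a \<Rightarrow> real"
  proof -
    have "(\<Sum>z\<in>UNIV. (if z = x then c else 0) * v z) = (\<Sum>z\<in>UNIV. if z = x then c * v x else 0)"
      by (rule sum.cong) auto
    then show ?thesis by simp
  qed
  have sin_eq: "(\<lambda>v. complex_of_real (sin (v x / L)))
      = (\<lambda>v. (- \<i> / 2) * cis (\<Sum>z\<in>UNIV. (if z = x then 1 / L else 0) * v z)
             + (\<i> / 2) * cis (\<Sum>z\<in>UNIV. (if z = x then - 1 / L else 0) * v z))"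
    unfolding coord by (rule ext) (simp add: complex_eq_iff cis.sel)
  have "trig_polynomial (\<lambda>v. complex_of_real (sin (v x / L)))"
    unfolding sin_eq by (intro trig_polynomial_add trig_polynomial_scale trig_polynomial_cis)
  moreover obtain c where "f = (\<lambda>y. y * c)"
    using linear real_bounded_linear by blast
  ultimately show ?case
    using trig_polynomial_scale[of _ "complex_of_real c"] by (simp add: mult.commute[of _ "complex_of_real c"])
next
  case (const c)
  then show ?case by (rule trig_polynomial_const)
next
  case (add f g)
  then show ?case by (simp add: trig_polynomial_add)
next
  case (mult f g)
  then show ?case by (simp add: trig_polynomial_mult)
qed

text \<open>On [-R, R] the substitution y = L arcsin s, L = 2R/pi, turns a polynomial in s into a
  polynomial in sin (y / L), i.e. a trigonometric polynomial, so Weierstrass approximation on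
  [-1, 1] applies. Approximating (1 - d) \<phi> rather than \<phi> keeps the approximant bounded by 1.\<close>
lemma trig_polynomial_approx_coord:
  fixes \<phi> :: "real \<Rightarrow> real"
  assumes cont: "continuous_on UNIV \<phi>" and bound: "\<And>y. \<bar>\<phi> y\<bar> \<le> 1" and "0 < R" "0 < e"
  obtains p where "trig_polynomial (\<lambda>v :: 'i::finite \<Rightarrow> real. p (v x))"
    and "\<And>y. \<bar>y\<bar> \<le> R \<Longrightarrow> norm (complex_of_real (\<phi> y) - p y) \<le> e"
    and "\<And>y. norm (p y) \<le> 1"
proof -
  define L where "L = 2 * R / pi"
  have L: "0 < L" "pi * L / 2 = R"
    unfolding L_def using \<open>0 < R\<close> by auto
  define d where "d = min (e / 2) 1"
  have d: "0 < d" "d \<le> 1" "2 * d \<le> e"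
    unfolding d_def using \<open>0 < e\<close> by auto
  define \<psi> where "\<psi> s = (1 - d) * \<phi> (L * arcsin s)" for s
  have "continuous_on {-1..1} \<psi>"
    unfolding \<psi>_def by (intro continuous_on_compose2[OF cont] continuous_intros) auto
  then obtain g where g: "real_polynomial_function g" "\<And>s. s \<in> {-1..1} \<Longrightarrow> \<bar>\<psi> s - g s\<bar> < d"
    using Stone_Weierstrass_real_polynomial_function[of "{-1..1::real}" \<psi> d] d by auto
  define p where "p y = complex_of_real (g (sin (y / L)))" for y
  have approx: "\<bar>(1 - d) * \<phi> (L * arcsin (sin (y / L))) - g (sin (y / L))\<bar> < d" for y
    using g(2)[of "sin (y / L)"] by (simp add: \<psi>_def sin_ge_minus_one)
  have scaled: "\<bar>(1 - d) * \<phi> z\<bar> \<le> 1 - d" "\<bar>\<phi> z - (1 - d) * \<phi> z\<bar> \<le> d" for z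
  proof -
    have "(1 - d) * \<bar>\<phi> z\<bar> \<le> 1 - d" "d * \<bar>\<phi> z\<bar> \<le> d"
      using bound[of z] d by (auto intro: mult_left_le)
    moreover have "\<phi> z - (1 - d) * \<phi> z = d * \<phi> z"
      by (simp add: algebra_simps)
    ultimately show "\<bar>(1 - d) * \<phi> z\<bar> \<le> 1 - d" "\<bar>\<phi> z - (1 - d) * \<phi> z\<bar> \<le> d"
      using d by (simp_all add: abs_mult)
  qed
  have "trig_polynomial (\<lambda>v :: 'i \<Rightarrow> real. p (v x))"
    unfolding p_def by (rule trig_polynomial_poly_sin_coord[OF g(1)])
  moreover have "norm (complex_of_real (\<phi> y) - p y) \<le> e" if "\<bar>y\<bar> \<le> R" for y
  proof -
    have "- (pi / 2) \<le> y / L" "y / L \<le> pi / 2"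
      using that L by (auto simp: field_simps abs_le_iff)
    then have "L * arcsin (sin (y / L)) = y"
      using L by (simp add: arcsin_sin)
    then have "\<bar>(1 - d) * \<phi> y - g (sin (y / L))\<bar> < d"
      using approx[of y] by simp
    then have "\<bar>\<phi> y - g (sin (y / L))\<bar> \<le> e"
      using scaled(2)[of y] d by linarith
    then show ?thesis
      by (simp add: p_def norm_of_real[symmetric] of_real_diff[symmetric] del: of_real_diff)
  qed
  moreover have "norm (p y) \<le> 1" for y
    using approx[of y] scaled(1)[of "L * arcsin (sin (y / L))"] by (simp add: p_def)
  ultimately show ?thesis
    using that by blast
qed

lemma trig_polynomial_approx_product:
  fixes \<phi> :: "'i::finite \<Rightarrow> real \<Rightarrow> real"
  assumes cont: "\<And>x. continuous_on UNIV (\<phi> x)" and bound: "\<And>x y. \<bar>\<phi> x y\<bar> \<le> 1"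
    and "0 < R" "0 < e"
  obtains G where "trig_polynomial G"
    and "\<And>v. (\<And>x. \<bar>v x\<bar> \<le> R) \<Longrightarrow> norm (complex_of_real (\<Prod>x\<in>UNIV. \<phi> x (v x)) - G v) \<le> e"
    and "\<And>v. norm (G v) \<le> 1"
proof -
  define e' where "e' = e / real CARD('i)"
  have "0 < e'"
    unfolding e'_def using \<open>0 < e\<close> by simp
  have "\<forall>x. \<exists>p. trig_polynomial (\<lambda>v :: 'i \<Rightarrow> real. p (v x))
      \<and> (\<forall>y. \<bar>y\<bar> \<le> R \<longrightarrow> norm (complex_of_real (\<phi> x y) - p y) \<le> e') \<and> (\<forall>y. norm (p y) \<le> 1)"
    by (metis trig_polynomial_approx_coord[OF cont bound \<open>0 < R\<close> \<open>0 < e'\<close>])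
  then obtain p where p: "\<And>x. trig_polynomial (\<lambda>v :: 'i \<Rightarrow> real. p x (v x))"
    "\<And>x y. \<bar>y\<bar> \<le> R \<Longrightarrow> norm (complex_of_real (\<phi> x y) - p x y) \<le> e'"
    "\<And>x y. norm (p x y) \<le> 1"
    by metis
  define G where "G v = (\<Prod>x\<in>UNIV. p x (v x))" for v :: "'i \<Rightarrow> real"
  have "trig_polynomial G"
    unfolding G_def by (intro trig_polynomial_prod p) auto
  moreover have "norm (complex_of_real (\<Prod>x\<in>UNIV. \<phi> x (v x)) - G v) \<le> e" if "\<And>x. \<bar>v x\<bar> \<le> R" for v
  proof -
    have "norm (complex_of_real (\<Prod>x\<in>UNIV. \<phi> x (v x)) - G v)
        \<le> (\<Sum>x\<in>UNIV. norm (complex_of_real (\<phi> x (v x)) - p x (v x)))"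
      unfolding G_def of_real_prod by (rule norm_prod_diff) (use bound p(3) in auto)
    also have "\<dots> \<le> (\<Sum>x\<in>(UNIV :: 'i set). e')"
      by (intro sum_mono p(2) that)
    also have "\<dots> = e"
      by (simp add: e'_def)
    finally show ?thesis .
  qed
  moreover have "norm (G v) \<le> 1" for v
    unfolding G_def prod_norm[symmetric] by (intro prod_le_1) (auto simp: p(3))
  ultimately show ?thesis
    using that by blast
qed

lemma integral_trig_polynomial_eq:
  fixes \<mu> \<nu> :: "('i::finite \<Rightarrow> real) measure"
  assumes "prob_space \<mu>" "prob_space \<nu>"
    and sets: "sets \<mu> = sets (Pi\<^sub>M UNIV (\<lambda>_. borel))" "sets \<nu> = sets (Pi\<^sub>M UNIV (\<lambda>_. borel))"
    and char: "char_vec \<mu> = char_vec \<nu>"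
    and "trig_polynomial f"
  shows "(\<integral>v. f v \<partial>\<mu>) = (\<integral>v. f v \<partial>\<nu>)"
proof -
  interpret \<mu>: prob_space \<mu> by fact
  interpret \<nu>: prob_space \<nu> by fact
  have integrable: "integrable \<mu> g \<and> integrable \<nu> g" if g: "trig_polynomial g" for g
  proof -
    obtain B where "\<forall>v. norm (g v) \<le> B"
      using trig_polynomial_bounded[OF g] by auto
    moreover have "g \<in> borel_measurable \<mu>" "g \<in> borel_measurable \<nu>"
      using trig_polynomial_measurable[OF g] measurable_cong_sets[OF sets(1) refl]
        measurable_cong_sets[OF sets(2) refl] by auto
    ultimately show ?thesis
      by (auto intro!: \<mu>.integrable_const_bound[where B=B] \<nu>.integrable_const_bound[where B=B])
  qed
  show ?thesis
    using \<open>trig_polynomial f\<close>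
  proof (induction rule: trig_polynomial.induct)
    case (trig_polynomial_cis t)
    then show ?case
      using char unfolding char_vec_def by metis
  next
    case (trig_polynomial_add f g)
    then show ?case
      using integrable[OF trig_polynomial_add(1)] integrable[OF trig_polynomial_add(2)] by simp
  qed simp
qed

lemma sets_outside_cube [measurable]:
  "{v :: 'i::finite \<Rightarrow> real. \<exists>x. R < \<bar>v x\<bar>} \<in> sets (Pi\<^sub>M UNIV (\<lambda>_. borel))"
proof -
  have "{v :: 'i \<Rightarrow> real. \<exists>x. R < \<bar>v x\<bar>} = (\<Union>x. {v \<in> space (Pi\<^sub>M UNIV (\<lambda>_. borel)). R < \<bar>v x\<bar>})"
    by (auto simp: space_PiM)
  also have "\<dots> \<in> sets (Pi\<^sub>M UNIV (\<lambda>_. borel))"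
    by measurable
  finally show ?thesis .
qed

lemma measure_outside_cube_tendsto_0:
  fixes \<mu> :: "('i::finite \<Rightarrow> real) measure"
  assumes "prob_space \<mu>" and sets: "sets \<mu> = sets (Pi\<^sub>M UNIV (\<lambda>_. borel))"
  shows "(\<lambda>k. measure \<mu> {v. \<exists>x. real k < \<bar>v x\<bar>}) \<longlonglongrightarrow> 0"
proof -
  interpret prob_space \<mu> by fact
  define A where "A k = {v :: 'i \<Rightarrow> real. \<exists>x. real k < \<bar>v x\<bar>}" for k :: nat
  have "A k \<in> sets \<mu>" for k
    unfolding A_def sets by (rule sets_outside_cube)
  moreover have "decseq A"
  proof (rule decseq_SucI)
    fix k
    have "real k < \<bar>v x\<bar>" if "real (Suc k) < \<bar>v x\<bar>" for v :: "'i \<Rightarrow> real" and x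
      using that by simp
    then show "A (Suc k) \<subseteq> A k"
      unfolding A_def by blast
  qed
  ultimately have "(\<lambda>k. measure \<mu> (A k)) \<longlonglongrightarrow> measure \<mu> (\<Inter>k. A k)"
    by (intro finite_Lim_measure_decseq) auto
  moreover have "(\<Inter>k. A k) = {}"
  proof safe
    fix v assume "v \<in> (\<Inter>k. A k)"
    then obtain x where "real (nat \<lceil>\<Sum>x\<in>UNIV. \<bar>v x\<bar>\<rceil>) < \<bar>v x\<bar>"
      unfolding A_def by blast
    moreover have "\<bar>v x\<bar> \<le> (\<Sum>x\<in>UNIV. \<bar>v x\<bar>)"
      by (rule member_le_sum) auto
    ultimately show "v \<in> {}"
      by linarith
  qed
  ultimately show ?thesis
    unfolding A_def by simp
qed

lemma norm_integral_diff_le_outside_cube: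
  fixes M :: "('i::finite \<Rightarrow> real) measure" and F G :: "('i \<Rightarrow> real) \<Rightarrow> complex"
  assumes "prob_space M" and sets: "sets M = sets (Pi\<^sub>M UNIV (\<lambda>_. borel))"
    and meas: "F \<in> borel_measurable (Pi\<^sub>M UNIV (\<lambda>_. borel))" "G \<in> borel_measurable (Pi\<^sub>M UNIV (\<lambda>_. borel))"
    and bound: "\<And>v. norm (F v) \<le> 1" "\<And>v. norm (G v) \<le> 1"
    and "0 \<le> e" and close: "\<And>v. (\<And>x. \<bar>v x\<bar> \<le> R) \<Longrightarrow> norm (F v - G v) \<le> e"
  shows "norm ((\<integral>v. F v \<partial>M) - (\<integral>v. G v \<partial>M)) \<le> e + 2 * measure M {v. \<exists>x. R < \<bar>v x\<bar>}"
proof -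
  interpret prob_space M by fact
  define A where "A = {v :: 'i \<Rightarrow> real. \<exists>x. R < \<bar>v x\<bar>}"
  have "A \<in> sets M"
    unfolding A_def sets by (rule sets_outside_cube)
  have "F \<in> borel_measurable M" "G \<in> borel_measurable M"
    using meas measurable_cong_sets[OF sets refl] by auto
  then have "integrable M F" "integrable M G"
    using bound by (auto intro: integrable_const_bound[where B=1])
  have diff_le: "norm (F v - G v) \<le> e + 2 * indicator A v" for v
  proof (cases "v \<in> A")
    case True
    have "norm (F v - G v) \<le> 2"
      using bound[of v] norm_triangle_ineq4[of "F v" "G v"] by linarith
    then show ?thesis
      using True \<open>0 \<le> e\<close> by simp
  next
    case False
    then show ?thesis
      using close[of v] unfolding A_def by (simp add: not_less)
  qed
  have bound_integrable: "integrable M (\<lambda>v. e + 2 * indicator A v :: real)"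
    using \<open>A \<in> sets M\<close>
    by (intro Bochner_Integration.integrable_add integrable_mult_right integrable_real_indicator)
      (auto simp: emeasure_eq_measure)
  have "norm ((\<integral>v. F v \<partial>M) - (\<integral>v. G v \<partial>M)) = norm (\<integral>v. F v - G v \<partial>M)"
    using \<open>integrable M F\<close> \<open>integrable M G\<close> by simp
  also have "\<dots> \<le> (\<integral>v. norm (F v - G v) \<partial>M)"
    by (rule integral_norm_bound)
  also have "\<dots> \<le> (\<integral>v. e + 2 * indicator A v \<partial>M)"
    using \<open>integrable M F\<close> \<open>integrable M G\<close> bound_integrable diff_le by (intro integral_mono) auto
  also have "\<dots> = e + 2 * measure M A"
    using \<open>A \<in> sets M\<close>
    by (subst Bochner_Integration.integral_add)
      (auto intro!: integrable_mult_right integrable_real_indicator simp: emeasure_eq_measure prob_space)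
  finally show ?thesis
    unfolding A_def .
qed

text \<open>Test functions are approximated by trigonometric polynomials on a large cube, and the
  cube carries all but a small part of the mass of both measures.\<close>
lemma integral_product_eq_if_char_vec_eq:
  fixes \<mu> \<nu> :: "('i::finite \<Rightarrow> real) measure" and \<phi> :: "'i \<Rightarrow> real \<Rightarrow> real"
  assumes P: "prob_space \<mu>" "prob_space \<nu>"
    and sets: "sets \<mu> = sets (Pi\<^sub>M UNIV (\<lambda>_. borel))" "sets \<nu> = sets (Pi\<^sub>M UNIV (\<lambda>_. borel))"
    and char: "char_vec \<mu> = char_vec \<nu>"
    and cont: "\<And>x. continuous_on UNIV (\<phi> x)" and bound: "\<And>x y. \<bar>\<phi> x y\<bar> \<le> 1"
  shows "(\<integral>v. (\<Prod>x\<in>UNIV. \<phi> x (v x)) \<partial>\<mu>) = (\<integral>v. (\<Prod>x\<in>UNIV. \<phi> x (v x)) \<partial>\<nu>)"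
proof -
  define F where "F v = complex_of_real (\<Prod>x\<in>UNIV. \<phi> x (v x))" for v :: "'i \<Rightarrow> real"
  have [measurable]: "\<phi> x \<in> borel_measurable borel" for x
    using cont by (intro borel_measurable_continuous_onI) auto
  have F_meas: "F \<in> borel_measurable (Pi\<^sub>M UNIV (\<lambda>_. borel))"
    unfolding F_def by measurable
  have F_bound: "norm (F v) \<le> 1" for v
    unfolding F_def norm_of_real abs_prod by (intro prod_le_1) (auto simp: bound)
  have close: "norm ((\<integral>v. F v \<partial>\<mu>) - (\<integral>v. F v \<partial>\<nu>)) \<le> 6 * \<delta>" if "0 < \<delta>" for \<delta>
  proof -
    have "\<forall>\<^sub>F k in sequentially. measure \<mu> {v. \<exists>x. real k < \<bar>v x\<bar>} < \<delta>
        \<and> measure \<nu> {v. \<exists>x. real k < \<bar>v x\<bar>} < \<delta> \<and> 1 \<le> k"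
      using order_tendstoD(2)[OF measure_outside_cube_tendsto_0[OF P(1) sets(1)] that]
        order_tendstoD(2)[OF measure_outside_cube_tendsto_0[OF P(2) sets(2)] that]
      by (auto simp: eventually_conj_iff eventually_ge_at_top)
    then obtain k where k: "measure \<mu> {v. \<exists>x. real k < \<bar>v x\<bar>} < \<delta>"
      "measure \<nu> {v. \<exists>x. real k < \<bar>v x\<bar>} < \<delta>" "1 \<le> k"
      by (auto simp: eventually_sequentially)
    obtain G where G: "trig_polynomial G"
      "\<And>v. (\<And>x. \<bar>v x\<bar> \<le> real k) \<Longrightarrow> norm (F v - G v) \<le> \<delta>" "\<And>v. norm (G v) \<le> 1"
      unfolding F_def
      by (rule trig_polynomial_approx_product[of \<phi> "real k" \<delta>, OF cont bound]) (use \<open>0 < \<delta>\<close> k(3) in auto)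
    note approx = norm_integral_diff_le_outside_cube[where R="real k", OF _ _ F_meas trig_polynomial_measurable[OF G(1)]
        F_bound G(3) less_imp_le[OF \<open>0 < \<delta>\<close>] G(2)]
    have "norm ((\<integral>v. F v \<partial>\<mu>) - (\<integral>v. G v \<partial>\<mu>)) \<le> 3 * \<delta>"
      using approx[OF P(1) sets(1)] k(1) by simp
    moreover have "norm ((\<integral>v. F v \<partial>\<nu>) - (\<integral>v. G v \<partial>\<nu>)) \<le> 3 * \<delta>"
      using approx[OF P(2) sets(2)] k(2) by simp
    moreover have "(\<integral>v. G v \<partial>\<mu>) = (\<integral>v. G v \<partial>\<nu>)"
      by (rule integral_trig_polynomial_eq[OF P sets char G(1)])
    ultimately show ?thesis
      using norm_diff_triangle_ineq[of "\<integral>v. F v \<partial>\<mu>" "\<integral>v. G v \<partial>\<mu>" "\<integral>v. G v \<partial>\<nu>" "\<integral>v. F v \<partial>\<nu>"]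
      by (simp add: norm_minus_commute)
  qed
  have "norm ((\<integral>v. F v \<partial>\<mu>) - (\<integral>v. F v \<partial>\<nu>)) \<le> 0"
  proof (rule field_le_epsilon)
    fix \<epsilon> :: real assume "0 < \<epsilon>"
    then show "norm ((\<integral>v. F v \<partial>\<mu>) - (\<integral>v. F v \<partial>\<nu>)) \<le> 0 + \<epsilon>"
      using close[of "\<epsilon> / 6"] by simp
  qed
  then show ?thesis
    unfolding F_def by (simp only: integral_complex_of_real of_real_eq_iff norm_le_zero_iff right_minus_eq)
qed

lemma indicator_open_continuous_approx:
  fixes U :: "real set"
  assumes "open U"
  obtains \<phi> :: "nat \<Rightarrow> real \<Rightarrow> real"
  where "\<And>k. continuous_on UNIV (\<phi> k)" "\<And>k y. \<bar>\<phi> k y\<bar> \<le> 1"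
    and "\<And>y. (\<lambda>k. \<phi> k y) \<longlonglongrightarrow> indicator U y"
proof (cases "U = UNIV")
  case True
  then show ?thesis
    by (intro that[of "\<lambda>k y. 1"]) auto
next
  case False
  define \<phi> where "\<phi> k y = min 1 (real k * infdist y (- U))" for k y
  have "continuous_on UNIV (\<phi> k)" for k
    unfolding \<phi>_def by (intro continuous_intros)
  moreover have "\<bar>\<phi> k y\<bar> \<le> 1" for k y
    unfolding \<phi>_def by (auto simp: infdist_nonneg)
  moreover have "(\<lambda>k. \<phi> k y) \<longlonglongrightarrow> indicator U y" for y
  proof (cases "y \<in> U")
    case True
    have d: "0 < infdist y (- U)"
      using False True \<open>open U\<close> by (intro infdist_pos_not_in_closed) auto
    have "\<forall>\<^sub>F k in sequentially. \<phi> k y = 1"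
    proof (rule eventually_sequentiallyI)
      fix k assume "nat \<lceil>1 / infdist y (- U)\<rceil> \<le> k"
      then have "1 / infdist y (- U) \<le> real k"
        by linarith
      then show "\<phi> k y = 1"
        using d by (simp add: \<phi>_def field_simps)
    qed
    then show ?thesis
      using True by (simp add: tendsto_eventually)
  next
    case False
    then show ?thesis
      by (simp add: \<phi>_def infdist_zero)
  qed
  ultimately show ?thesis
    using that by blast
qed

lemma sets_PiM_borel_eq_sigma_open_boxes:
  "sets (Pi\<^sub>M UNIV (\<lambda>_. borel :: real measure))
     = sigma_sets UNIV {Pi\<^sub>E UNIV X | X :: 'i::finite \<Rightarrow> real set. \<forall>i. open (X i)}"
  (is "_ = sigma_sets UNIV ?E")
proof -
  have "sets (borel :: ('i \<Rightarrow> real) measure) = sigma_sets UNIV ?E"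
  proof
    obtain K :: "('i \<Rightarrow> real) set set" where K: "topological_basis K" "countable K"
      "\<And>k. k \<in> K \<Longrightarrow> \<exists>X. k = Pi\<^sub>E UNIV X \<and> (\<forall>i. open (X i)) \<and> finite {i. X i \<noteq> UNIV}"
      using product_topology_countable_basis by fast
    interpret sigma: sigma_algebra UNIV "sigma_sets UNIV ?E"
      by (rule sigma_algebra_sigma_sets) simp
    have "U \<in> sigma_sets UNIV ?E" if "open U" for U :: "('i \<Rightarrow> real) set"
    proof -
      obtain B where "B \<subseteq> K" "U = \<Union>B"
        using \<open>open U\<close> K(1) by (metis topological_basis_def)
      have "countable B"
        using \<open>B \<subseteq> K\<close> K(2) countable_subset by blast
      moreover have "B \<subseteq> sigma_sets UNIV ?E"
        using \<open>B \<subseteq> K\<close> K(3) by (blast intro: sigma_sets.Basic)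
      ultimately show ?thesis
        unfolding \<open>U = \<Union>B\<close> by (rule sigma.countable_Union)
    qed
    then show "sets borel \<subseteq> sigma_sets UNIV ?E"
      unfolding sets_borel by (intro sigma.sigma_sets_subset) auto
    show "sigma_sets UNIV ?E \<subseteq> sets borel"
      by (intro sets.sigma_sets_subset') (auto simp: space_borel intro!: borel_open open_PiE)
  qed
  then show ?thesis
    by (simp add: sets_PiM_equal_borel)
qed

lemma tendsto_integral_prod_measure_box:
  fixes M :: "('i::finite \<Rightarrow> real) measure" and \<phi> :: "'i \<Rightarrow> nat \<Rightarrow> real \<Rightarrow> real"
  assumes "prob_space M" and sets_M: "sets M = sets (Pi\<^sub>M UNIV (\<lambda>_. borel))"
    and X: "\<And>i. X i \<in> sets borel"
    and cont: "\<And>x k. continuous_on UNIV (\<phi> x k)" and bound: "\<And>x k y. \<bar>\<phi> x k y\<bar> \<le> 1"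
    and lim: "\<And>x y. (\<lambda>k. \<phi> x k y) \<longlonglongrightarrow> indicator (X x) y"
  shows "(\<lambda>k. \<integral>v. (\<Prod>x\<in>UNIV. \<phi> x k (v x)) \<partial>M) \<longlonglongrightarrow> measure M (Pi\<^sub>E UNIV X)"
proof -
  interpret prob_space M by fact
  have [measurable]: "\<phi> x k \<in> borel_measurable borel" for x k
    using cont by (intro borel_measurable_continuous_onI) auto
  have box: "Pi\<^sub>E UNIV X \<in> sets M"
    unfolding sets_M by (auto intro: sets_PiM_I_countable X)
  have indicator_box: "(\<Prod>x\<in>UNIV. indicator (X x) (v x)) = (indicator (Pi\<^sub>E UNIV X) v :: real)" for v
    by (simp add: indicator_def PiE_iff prod.neutral prod_zero_iff)
  have "(\<lambda>k. \<integral>v. (\<Prod>x\<in>UNIV. \<phi> x k (v x)) \<partial>M) \<longlonglongrightarrow> (\<integral>v. indicator (Pi\<^sub>E UNIV X) v \<partial>M)"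
  proof (rule integral_dominated_convergence[where w="\<lambda>_. 1"])
    show "(\<lambda>v. \<Prod>x\<in>UNIV. \<phi> x k (v x)) \<in> borel_measurable M" for k
      unfolding measurable_cong_sets[OF sets_M refl] by measurable
    show "AE v in M. (\<lambda>k. \<Prod>x\<in>UNIV. \<phi> x k (v x)) \<longlonglongrightarrow> indicator (Pi\<^sub>E UNIV X) v"
      unfolding indicator_box[symmetric] by (intro AE_I2 tendsto_prod lim)
    show "AE v in M. norm (\<Prod>x\<in>UNIV. \<phi> x k (v x)) \<le> 1" for k
      by (intro AE_I2) (auto simp: abs_prod intro!: prod_le_1 bound)
  qed (use box in simp_all)
  then show ?thesis
    using box by simp
qed

lemma measure_open_box_eq_if_char_vec_eq:
  fixes \<mu> \<nu> :: "('i::finite \<Rightarrow> real) measure"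
  assumes P: "prob_space \<mu>" "prob_space \<nu>"
    and sets: "sets \<mu> = sets (Pi\<^sub>M UNIV (\<lambda>_. borel))" "sets \<nu> = sets (Pi\<^sub>M UNIV (\<lambda>_. borel))"
    and char: "char_vec \<mu> = char_vec \<nu>"
    and X: "\<And>i. open (X i)"
  shows "measure \<mu> (Pi\<^sub>E UNIV X) = measure \<nu> (Pi\<^sub>E UNIV X)"
proof -
  have "\<forall>x. \<exists>\<phi> :: nat \<Rightarrow> real \<Rightarrow> real. (\<forall>k. continuous_on UNIV (\<phi> k)) \<and> (\<forall>k y. \<bar>\<phi> k y\<bar> \<le> 1)
      \<and> (\<forall>y. (\<lambda>k. \<phi> k y) \<longlonglongrightarrow> indicator (X x) y)"
    by (metis indicator_open_continuous_approx X)
  then obtain \<phi> :: "'i \<Rightarrow> nat \<Rightarrow> real \<Rightarrow> real" where \<phi>: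
    "\<And>x k. continuous_on UNIV (\<phi> x k)" "\<And>x k y. \<bar>\<phi> x k y\<bar> \<le> 1"
    "\<And>x y. (\<lambda>k. \<phi> x k y) \<longlonglongrightarrow> indicator (X x) y"
    by metis
  note lim = tendsto_integral_prod_measure_box[OF _ _ borel_open[OF X] \<phi>]
  show ?thesis
    using lim[OF P(1) sets(1)] lim[OF P(2) sets(2)]
    unfolding integral_product_eq_if_char_vec_eq[OF P sets char \<phi>(1,2)] by (rule LIMSEQ_unique)
qed

theorem char_vec_unique:
  fixes \<mu> \<nu> :: "('i::finite \<Rightarrow> real) measure"
  assumes P: "prob_space \<mu>" "prob_space \<nu>"
    and sets: "sets \<mu> = sets (Pi\<^sub>M UNIV (\<lambda>_. borel))" "sets \<nu> = sets (Pi\<^sub>M UNIV (\<lambda>_. borel))"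
    and char: "char_vec \<mu> = char_vec \<nu>"
  shows "\<mu> = \<nu>"
proof (rule measure_eqI_generator_eq[where A="\<lambda>_. UNIV"])
  let ?E = "{Pi\<^sub>E UNIV X | X :: 'i \<Rightarrow> real set. \<forall>i. open (X i)}"
  show "Int_stable ?E"
  proof (rule Int_stableI, safe)
    fix X Y :: "'i \<Rightarrow> real set" assume "\<forall>i. open (X i)" "\<forall>i. open (Y i)"
    then show "\<exists>Z. Pi\<^sub>E UNIV X \<inter> Pi\<^sub>E UNIV Y = Pi\<^sub>E UNIV Z \<and> (\<forall>i. open (Z i))"
      by (intro exI[of _ "\<lambda>i. X i \<inter> Y i"]) (auto simp: PiE_Int)
  qed
  show "sets \<mu> = sigma_sets UNIV ?E" "sets \<nu> = sigma_sets UNIV ?E"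
    using sets sets_PiM_borel_eq_sigma_open_boxes by auto
  show "range (\<lambda>_. UNIV) \<subseteq> ?E"
    by (auto intro!: exI[of _ "\<lambda>_. UNIV"])
  show "emeasure \<mu> UNIV \<noteq> \<infinity>"
    using prob_space.emeasure_space_1[OF P(1)] sets_eq_imp_space_eq[OF sets(1)] by (simp add: space_PiM)
  fix A assume "A \<in> ?E"
  then obtain X where "A = Pi\<^sub>E UNIV X" "\<And>i. open (X i)"
    by auto
  then show "emeasure \<mu> A = emeasure \<nu> A"
    using measure_open_box_eq_if_char_vec_eq[OF P sets char] P
    by (simp add: finite_measure.emeasure_eq_measure prob_space_def)
qed auto

lemma char_vec_distr:
  fixes \<eta> :: "'i::finite \<Rightarrow> 'b \<Rightarrow> real"
  assumes "\<And>x. \<eta> x \<in> borel_measurable N"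
  shows "char_vec (distr N (Pi\<^sub>M UNIV (\<lambda>_. borel)) (\<lambda>\<omega> x. \<eta> x \<omega>)) t
           = (\<integral>\<omega>. cis (\<Sum>x\<in>UNIV. t x * \<eta> x \<omega>) \<partial>N)"
  unfolding char_vec_def
  by (rule integral_distr) (auto intro!: measurable_PiM_single' assms)

lemma distr_centered_gaussian_vector_unique:
  fixes \<eta>\<^sub>1 :: "'i::finite \<Rightarrow> 'b \<Rightarrow> real" and \<eta>\<^sub>2 :: "'i \<Rightarrow> 'c \<Rightarrow> real"
  assumes "centered_gaussian_vector N\<^sub>1 \<eta>\<^sub>1 C" and "centered_gaussian_vector N\<^sub>2 \<eta>\<^sub>2 C"
  shows "distr N\<^sub>1 (Pi\<^sub>M UNIV (\<lambda>_. borel)) (\<lambda>\<omega> x. \<eta>\<^sub>1 x \<omega>) = distr N\<^sub>2 (Pi\<^sub>M UNIV (\<lambda>_. borel)) (\<lambda>\<omega> x. \<eta>\<^sub>2 x \<omega>)"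
proof (rule char_vec_unique)
  have "prob_space N\<^sub>1" "prob_space N\<^sub>2" and meas: "\<And>x. \<eta>\<^sub>1 x \<in> borel_measurable N\<^sub>1" "\<And>x. \<eta>\<^sub>2 x \<in> borel_measurable N\<^sub>2"
    using assms unfolding centered_gaussian_vector_def by auto
  then show "prob_space (distr N\<^sub>1 (Pi\<^sub>M UNIV (\<lambda>_. borel)) (\<lambda>\<omega> x. \<eta>\<^sub>1 x \<omega>))"
    "prob_space (distr N\<^sub>2 (Pi\<^sub>M UNIV (\<lambda>_. borel)) (\<lambda>\<omega> x. \<eta>\<^sub>2 x \<omega>))"
    by (auto intro!: prob_space.prob_space_distr measurable_PiM_single')
  show "char_vec (distr N\<^sub>1 (Pi\<^sub>M UNIV (\<lambda>_. borel)) (\<lambda>\<omega> x. \<eta>\<^sub>1 x \<omega>))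
      = char_vec (distr N\<^sub>2 (Pi\<^sub>M UNIV (\<lambda>_. borel)) (\<lambda>\<omega> x. \<eta>\<^sub>2 x \<omega>))"
    using assms unfolding fun_eq_iff char_vec_distr[OF meas(1)] char_vec_distr[OF meas(2)]
    by (simp add: centered_gaussian_vector_def)
qed simp_all

lemma distr_compose_eq:
  assumes "X \<in> measurable M S" "Y \<in> measurable N S" "F \<in> measurable S T"
    and "distr M S X = distr N S Y"
  shows "distr M T (\<lambda>\<omega>. F (X \<omega>)) = distr N T (\<lambda>\<omega>. F (Y \<omega>))"
  using distr_distr[OF assms(3,1)] distr_distr[OF assms(3,2)] assms(4) by (simp add: comp_def)

lemma measurable_shift_by_min:
  "(\<lambda>v :: 'i::finite \<Rightarrow> real. \<lambda>x. v x - Min (range v))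
     \<in> measurable (Pi\<^sub>M UNIV (\<lambda>_. borel)) (Pi\<^sub>M UNIV (\<lambda>_. borel))"
  by (rule measurable_PiM_single') auto

theorem proposition1p3:
  fixes E :: "'a::finite \<Rightarrow> 'a \<Rightarrow> bool"
    and M :: "'b measure"
    and \<sigma> :: "'a \<Rightarrow> 'b \<Rightarrow> real"
    and s :: "'b \<Rightarrow> 'a \<Rightarrow> real"
  assumes graph: "simple_graph E" and conn: "connected_graph E"
    and P: "prob_space M"
    and indep: "prob_space.indep_vars M (\<lambda>_. borel) \<sigma> UNIV"
    and normal: "\<And>x. distributed M lborel (\<sigma> x) std_normal_density"
    and s_def: "\<And>\<omega> x. s \<omega> x = 1 + \<sigma> x \<omega> - (1 / real CARD('a)) * (\<Sum>y\<in>UNIV. \<sigma> y \<omega>)"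
  shows "(\<forall>\<omega>\<in>space M. stabilizes E (s \<omega>) \<and>
            (\<forall>x. s \<omega> x + laplacian E (odometer E (s \<omega>)) x = 1))
       \<and> (\<exists>(N :: 'b measure) \<eta>. centered_gaussian_vector N \<eta> (eta_cov E))
       \<and> (\<forall>(N :: 'b measure) \<eta>. centered_gaussian_vector N \<eta> (eta_cov E) \<longrightarrow>
            distr M (Pi\<^sub>M UNIV (\<lambda>_. borel)) (\<lambda>\<omega>. odometer E (s \<omega>))
          = distr N (Pi\<^sub>M UNIV (\<lambda>_. borel)) (\<lambda>\<omega> x. \<eta> x \<omega> - Min (range (\<lambda>y. \<eta> y \<omega>))))"
proof -
  define A where "A x z = green E z x / real (deg E x)" for x z
  define \<eta> where "\<eta> x \<omega> = (\<Sum>z\<in>UNIV. A x z * \<sigma> z \<omega>)" for x \<omega>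
  have toppling: "s \<omega> x + laplacian E (\<lambda>x. \<eta> x \<omega>) x = 1" for \<omega> x
    unfolding \<eta>_def A_def laplacian_green_potential[OF graph conn] s_def by simp
  note odometer = odometer_eq_shift_min[OF graph conn toppling]
  have gaussian: "centered_gaussian_vector M \<eta> (eta_cov E)"
  proof -
    have "eta_cov E = (\<lambda>x y. \<Sum>z\<in>UNIV. A x z * A y z)"
      unfolding eta_cov_def A_def by (simp add: fun_eq_iff sum_distrib_left field_simps)
    then show ?thesis
      unfolding \<eta>_def using centered_gaussian_vector_linear_transform[OF P indep normal] by simp
  qed
  have "distr M (Pi\<^sub>M UNIV (\<lambda>_. borel)) (\<lambda>\<omega>. odometer E (s \<omega>))
      = distr N (Pi\<^sub>M UNIV (\<lambda>_. borel)) (\<lambda>\<omega> x. \<eta>' x \<omega> - Min (range (\<lambda>y. \<eta>' y \<omega>)))"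
    if "centered_gaussian_vector N \<eta>' (eta_cov E)" for N :: "'b measure" and \<eta>'
    unfolding odometer
    by (rule distr_compose_eq[OF _ _ measurable_shift_by_min
          distr_centered_gaussian_vector_unique[OF gaussian that]])
      (use gaussian that in \<open>auto simp: centered_gaussian_vector_def intro!: measurable_PiM_single'\<close>)
  then show ?thesis
    using odometer toppling gaussian by (auto simp: laplacian_diff_const)
qed

end
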